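(* Under the setting below, assume $G$ is convex, the sampling is essentially cyclic with period $T\ge1$ (every $i\in[N]$ belongs to at least one of $I^{k+1},\dots,I^{k+T}$ for every $k\ge0$), and each $f_i$ is $\mu_{f_i}$-strongly convex ($\mu_{f_i}>0$). Let $\delta:=\min_{i}\frac{\gamma_i\mu_{f_i}}{N}$, $\Delta:=\max_i\frac{\gamma_iL_{f_i}}{N}$, $\bm x^\star$ the unique minimizer of $\Phi$, $\mu_F:=\frac1N\operatorname{blockdiag}(\mu_{f_1}I_{n_1},\dots,\mu_{f_N}I_{n_N})$ and $c:=\frac{\delta(1-\Delta)}{N(1+T(1-\delta))^2(1-\delta)}$. Then for all $\nu\in\mathbb N$: $\Phi^{\mathrm{FB}}_\Gamma(\bm x^{T(\nu+1)})-\min\Phi\le(1-c)(\Phi^{\mathrm{FB}}_\Gamma(\bm x^{T\nu})-\min\Phi)$, $\Phi(\bm z^{T\nu})-\min\Phi\le(\Phi(\bm x^0)-\min\Phi)(1-c)^\nu$, $\frac12\|\bm z^{T\nu}-\bm x^\star\|^2_{\mu_F}\le(\Phi(\bm x^0)-\min\Phi)(1-c)^\nu$. If the sampling is shuffled cyclic, i.e. $I^{k+1}=\{\pi_{\lfloor k/N\rfloor}(\mathrm{mod}(k,N)+1)\}$ for permutations $\pi_0,\pi_1,\dots$ of $[N]$ (which includes the cyclic rule $I^{k+1}=\{\mathrm{mod}(k,N)+1\}$), then the same three inequalities hold with $T$ replaced by $N$ and with $c:=\frac{\delta(1-\Delta)}{N(2-\delta)^2(1-\delta)}$.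
   Context: Setting: $N\ge1$, $n=\sum_{i=1}^N n_i$, $\bm x=(x_1,\dots,x_N)$ with $x_i\in\mathbb R^{n_i}$; $\Phi=F+G$ with $F(\bm x)=\frac1N\sum_i f_i(x_i)$, each $f_i:\mathbb R^{n_i}\to\mathbb R$ differentiable with $L_{f_i}$-Lipschitz gradient, $G:\mathbb R^n\to\mathbb R\cup\{+\infty\}$ proper lsc, $\arg\min\Phi\ne\emptyset$. $\gamma_i\in(0,N/L_{f_i})$, $\Gamma=\operatorname{blockdiag}(\gamma_1I_{n_1},\dots,\gamma_NI_{n_N})$, $\|x\|_V^2=\langle x,Vx\rangle$, $\operatorname{prox}_G^{V}(u)=\arg\min_w\{G(w)+\frac12\|w-u\|_V^2\}$, $\mathbf T(\bm x)=\operatorname{prox}_G^{\Gamma^{-1}}(\bm x-\Gamma\nabla F(\bm x))$. Forward-backward envelope: $\Phi^{\mathrm{FB}}_\Gamma(\bm x):=\inf_{\bm w}\{F(\bm x)+\langle\nabla F(\bm x),\bm w-\bm x\rangle+G(\bm w)+\frac12\|\bm w-\bm x\|^2_{\Gamma^{-1}}\}$. Algorithm BC: given $\bm x^0\in\mathbb R^n$, for $k=0,1,\dots$: pick $\bm z^k\in\mathbf T(\bm x^k)$; select $I^{k+1}\subseteq[N]$; set $x_i^{k+1}=z_i^k$ for $i\in I^{k+1}$ and $x_i^{k+1}=x_i^k$ otherwise. *)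

theory Defs
  imports "HOL-Analysis.Analysis"
begin

text \<open>The ambient space R^n is real^'n; its coordinates are partitioned into the
blocks 1..N by the map blk :: 'n => nat (coordinate j belongs to block blk j).\<close>

definition blkproj :: "('n::finite \<Rightarrow> nat) \<Rightarrow> nat \<Rightarrow> real^'n \<Rightarrow> real^'n" where
  "blkproj blk i x = (\<chi> j. if blk j = i then x $ j else 0)"

definition wnormsq :: "('n::finite \<Rightarrow> real) \<Rightarrow> real^'n \<Rightarrow> real" where
  "wnormsq w v = (\<Sum>j\<in>UNIV. w j * (v $ j)^2)"

definition Fsum :: "nat \<Rightarrow> (nat \<Rightarrow> real^'n::finite \<Rightarrow> real) \<Rightarrow> real^'n \<Rightarrow> real" where
  "Fsum N f x = (1 / real N) * (\<Sum>i\<in>{1..N}. f i x)"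

definition gradF :: "nat \<Rightarrow> (nat \<Rightarrow> real^'n::finite \<Rightarrow> real^'n) \<Rightarrow> real^'n \<Rightarrow> real^'n" where
  "gradF N df x = (1 / real N) *\<^sub>R (\<Sum>i\<in>{1..N}. df i x)"

text \<open>G : R^n -> R u {+oo} is encoded by its effective domain domG and its (real)
values on domG; G = +oo outside domG.\<close>
definition lsc_dom :: "(real^'n::finite) set \<Rightarrow> (real^'n \<Rightarrow> real) \<Rightarrow> bool" where
  "lsc_dom D G \<longleftrightarrow> closed {(x, t). x \<in> D \<and> G x \<le> t}"

definition proxset :: "(real^'n::finite) set \<Rightarrow> (real^'n \<Rightarrow> real) \<Rightarrow> ('n \<Rightarrow> real) \<Rightarrow> real^'n \<Rightarrow> (real^'n) set" where
  "proxset D G v u = {w \<in> D. \<forall>y\<in>D. G w + 1/2 * wnormsq v (w - u) \<le> G y + 1/2 * wnormsq v (y - u)}"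

definition Tmap :: "nat \<Rightarrow> ('n::finite \<Rightarrow> nat) \<Rightarrow> (nat \<Rightarrow> real) \<Rightarrow> (nat \<Rightarrow> real^'n \<Rightarrow> real^'n)
    \<Rightarrow> (real^'n) set \<Rightarrow> (real^'n \<Rightarrow> real) \<Rightarrow> real^'n \<Rightarrow> (real^'n) set" where
  "Tmap N blk \<gamma> df D G x =
     proxset D G (\<lambda>j. 1 / \<gamma> (blk j)) (x - (\<chi> j. \<gamma> (blk j) * gradF N df x $ j))"

text \<open>Forward-backward envelope (infimum over w; w outside domG gives +oo).\<close>
definition FBE :: "nat \<Rightarrow> ('n::finite \<Rightarrow> nat) \<Rightarrow> (nat \<Rightarrow> real) \<Rightarrow> (nat \<Rightarrow> real^'n \<Rightarrow> real)
    \<Rightarrow> (nat \<Rightarrow> real^'n \<Rightarrow> real^'n) \<Rightarrow> (real^'n) set \<Rightarrow> (real^'n \<Rightarrow> real) \<Rightarrow> real^'n \<Rightarrow> real" where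
  "FBE N blk \<gamma> f df D G x =
     Inf ((\<lambda>w. Fsum N f x + inner (gradF N df x) (w - x) + G w
               + 1/2 * wnormsq (\<lambda>j. 1 / \<gamma> (blk j)) (w - x)) ` D)"

definition ess_cyclic :: "nat \<Rightarrow> (nat \<Rightarrow> nat set) \<Rightarrow> nat \<Rightarrow> bool" where
  "ess_cyclic N I T \<longleftrightarrow> (\<forall>k. \<forall>i\<in>{1..N}. \<exists>t\<in>{1..T}. i \<in> I (k + t))"

definition shuffled_cyclic :: "nat \<Rightarrow> (nat \<Rightarrow> nat set) \<Rightarrow> bool" where
  "shuffled_cyclic N I \<longleftrightarrow> (\<exists>\<pi>::nat \<Rightarrow> nat \<Rightarrow> nat.
      (\<forall>m. \<pi> m permutes {1..N}) \<and> (\<forall>k. I (Suc k) = {\<pi> (k div N) (k mod N + 1)}))"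

end

theory Submission
  imports Defs
begin

text \<open>The forward-backward operator T is a (1 - \<delta>)-contraction in the \<Gamma>\<inverse>-norm: the
  forward step contracts every block by strong convexity and cocoercivity, and the proximal
  step is nonexpansive.  A block-coordinate step decreases the forward-backward envelope by
  (1 - \<Delta>)/2 times its squared \<Gamma>\<inverse>-length, while the envelope gap is at most
  (1 - \<delta>)/(2\<delta>) |T x - x|^2.  Over an epoch in which every block is updated, each block of
  T x^k - x^k is that block's first update plus a difference of two values of T, so by the
  contraction |T x^k - x^k|^2 is at most (1 + \<rho>)^2 times the squared steps of the epoch,
  where \<rho>^2 = (1 - \<delta>)^2 T B with B = T for essentially cyclic sampling (Cauchy-Schwarz) and
  B = 1 for shuffled cyclic sampling (every coordinate moves once per epoch).  Sufficient
  decrease and the error bound give the contraction per epoch; the bounds on \<Phi>(z) and on the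
  distance to the minimizer follow from \<Phi>(T x) \<le> \<Phi>^FB(x) \<le> \<Phi>(x) and the quadratic growth
  of \<Phi> around its minimizer.\<close>

lemma le_of_forall_le_add_mult:
  fixes a b c :: real
  assumes "\<And>t. 0 < t \<Longrightarrow> t \<le> 1 \<Longrightarrow> a \<le> b + t * c"
  shows "a \<le> b"
proof (rule field_le_epsilon)
  fix e :: real assume e: "0 < e"
  define t where "t = min 1 (e / (\<bar>c\<bar> + 1))"
  have t: "0 < t" "t \<le> 1" using e by (auto simp: t_def)
  have "t * c \<le> t * \<bar>c\<bar>" using t by (intro mult_left_mono) auto
  also have "\<dots> \<le> e / (\<bar>c\<bar> + 1) * (\<bar>c\<bar> + 1)"
    using t by (intro mult_mono) (auto simp: t_def)
  also have "\<dots> = e" by simp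
  finally show "a \<le> b + e" using assms[OF t] by linarith
qed

lemma square_sum_le_if_at_most_one_nonzero:
  fixes a :: "nat \<Rightarrow> real"
  assumes t: "t \<le> P" and one: "\<And>s s'. s < P \<Longrightarrow> s' < P \<Longrightarrow> a s \<noteq> 0 \<Longrightarrow> a s' \<noteq> 0 \<Longrightarrow> s = s'"
  shows "(\<Sum>s<t. a s)^2 \<le> (\<Sum>s<P. (a s)^2)"
proof (cases "\<exists>s0<t. a s0 \<noteq> 0")
  case True
  then obtain s0 where s0: "s0 < t" "a s0 \<noteq> 0" by blast
  have "(\<Sum>s<t. a s) = a s0 + (\<Sum>s\<in>{..<t} - {s0}. a s)"
    using s0 by (intro sum.remove) auto
  also have "(\<Sum>s\<in>{..<t} - {s0}. a s) = 0"
    using one s0 t by (intro sum.neutral) (metis Diff_iff insertI1 lessThan_iff order_less_le_trans)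
  finally have "(\<Sum>s<t. a s) = a s0" by simp
  then show ?thesis
    using s0 t by (auto intro!: member_le_sum)
next
  case False
  then show ?thesis by (simp add: sum_nonneg)
qed

lemma quadratic_gap_le:
  fixes a b d m e :: real
  assumes "0 < d" "0 < e" "e * d \<le> m"
  shows "a * b * d - a^2 * d / 2 - m * b^2 / 2 \<le> (1 - e) / (2 * e) * a^2 * d"
proof -
  have "(1 - e) / (2 * e) * a^2 * d - (a * b * d - a^2 * d / 2 - m * b^2 / 2)
      = d / (2 * e) * (a - e * b)^2 + (m - e * d) * b^2 / 2"
    using assms by (simp add: field_simps power2_eq_square)
  moreover have "0 \<le> d / (2 * e) * (a - e * b)^2" "0 \<le> (m - e * d) * b^2 / 2"
    using assms by simp_all
  ultimately show ?thesis by linarith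
qed

lemma contraction_of_error_bound_and_decrease:
  fixes F F' m K \<alpha> E :: real
  assumes err: "F - m \<le> K * E" and dec: "F' \<le> F - \<alpha> * E" and "0 < K" "0 \<le> \<alpha>"
  shows "F' - m \<le> (1 - \<alpha> / K) * (F - m)"
proof -
  have "\<alpha> / K * (F - m) \<le> \<alpha> / K * (K * E)"
    using err assms by (intro mult_left_mono) auto
  then have "\<alpha> / K * (F - m) \<le> \<alpha> * E" using \<open>0 < K\<close> by simp
  then show ?thesis using dec by (simp add: algebra_simps)
qed

lemma geometric_decay:
  fixes a :: "nat \<Rightarrow> real"
  assumes step: "\<And>n. a (Suc n) \<le> q * a n" and "0 \<le> q"
  shows "a n \<le> q ^ n * a 0"
proof (induction n)
  case (Suc n)
  have "a (Suc n) \<le> q * a n" by (rule step)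
  also have "\<dots> \<le> q * (q ^ n * a 0)" using Suc.IH \<open>0 \<le> q\<close> by (rule mult_left_mono)
  finally show ?case by simp
qed simp

definition diag_sqrt :: "('n::finite \<Rightarrow> real) \<Rightarrow> real^'n \<Rightarrow> real^'n" where
  "diag_sqrt w v = (\<chi> j. sqrt (w j) * v $ j)"

lemma linear_diag_sqrt: "linear (diag_sqrt w)"
  by (rule linearI) (simp_all add: diag_sqrt_def vec_eq_iff algebra_simps)

lemma inner_diag_sqrt:
  assumes "\<And>j. 0 \<le> w j"
  shows "inner (diag_sqrt w a) (diag_sqrt w b) = (\<Sum>j\<in>UNIV. w j * a $ j * b $ j)"
  unfolding inner_vec_def diag_sqrt_def
  by (rule sum.cong) (simp_all add: assms algebra_simps real_sqrt_mult_self)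

lemma norm_diag_sqrt:
  assumes "\<And>j. 0 \<le> w j"
  shows "(norm (diag_sqrt w v))^2 = wnormsq w v"
  unfolding power2_norm_eq_inner inner_diag_sqrt[OF assms] wnormsq_def
  by (simp add: power2_eq_square mult.assoc)

lemma wnormsq_nonneg: "(\<And>j. 0 \<le> w j) \<Longrightarrow> 0 \<le> wnormsq w v"
  unfolding wnormsq_def by (intro sum_nonneg) simp

lemma wnormsq_scaleR: "wnormsq w (t *\<^sub>R v) = t^2 * wnormsq w v"
  by (simp add: wnormsq_def sum_distrib_left power_mult_distrib algebra_simps)

lemma wnormsq_scale_weights: "wnormsq (\<lambda>j. c * w j) v = c * wnormsq w v"
  by (simp add: wnormsq_def sum_distrib_left mult.assoc)

lemma wnormsq_mono_weights: "(\<And>j. a j \<le> b j) \<Longrightarrow> wnormsq a v \<le> wnormsq b v"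
  unfolding wnormsq_def by (intro sum_mono mult_right_mono) auto

lemma wnormsq_add_le:
  assumes "\<And>j. 0 \<le> w j"
  shows "wnormsq w (a + b) \<le> (sqrt (wnormsq w a) + sqrt (wnormsq w b))^2"
proof -
  have "norm (diag_sqrt w (a + b)) \<le> norm (diag_sqrt w a) + norm (diag_sqrt w b)"
    unfolding linear_add[OF linear_diag_sqrt] by (rule norm_triangle_ineq)
  then have "(norm (diag_sqrt w (a + b)))^2 \<le> (norm (diag_sqrt w a) + norm (diag_sqrt w b))^2"
    by (simp add: power_mono)
  then show ?thesis unfolding norm_diag_sqrt[OF assms, symmetric] by simp
qed

lemma wnormsq_select_le_sum:
  fixes P :: nat
  assumes "\<And>j. 0 \<le> w j" and "\<And>j. t j < P"
  shows "wnormsq w (\<chi> j. v (t j) $ j) \<le> (\<Sum>s<P. wnormsq w (v s))"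
proof -
  have "wnormsq w (\<chi> j. v (t j) $ j) \<le> (\<Sum>j\<in>UNIV. \<Sum>s<P. w j * (v s $ j)^2)"
    unfolding wnormsq_def
  proof (rule sum_mono)
    fix j
    show "w j * ((\<chi> j. v (t j) $ j) $ j)^2 \<le> (\<Sum>s<P. w j * (v s $ j)^2)"
      using member_le_sum[of "t j" "{..<P}" "\<lambda>s. w j * (v s $ j)^2"] assms by simp
  qed
  then show ?thesis unfolding wnormsq_def by (subst (asm) sum.swap)
qed

lemma proxset_variational_ineq:
  assumes D: "convex D" and G: "convex_on D G" and w: "\<And>j. 0 \<le> w j"
    and z: "z \<in> proxset D G w u" and y: "y \<in> D"
  shows "G z \<le> G y + inner (diag_sqrt w (z - u)) (diag_sqrt w (y - z))"
proof -
  interpret W: linear "diag_sqrt w" by (rule linear_diag_sqrt)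
  define A where "A = diag_sqrt w (z - u)"
  define B where "B = diag_sqrt w (y - z)"
  have zD: "z \<in> D" using z by (simp add: proxset_def)
  have min: "G z + 1/2 * (norm A)^2 \<le> G v + 1/2 * (norm (diag_sqrt w (v - u)))^2" if "v \<in> D" for v
    using z that unfolding A_def norm_diag_sqrt[OF w] by (simp add: proxset_def)
  show ?thesis
    unfolding A_def[symmetric] B_def[symmetric]
  proof (rule le_of_forall_le_add_mult[where c = "(norm B)^2 / 2"])
    fix t :: real assume t: "0 < t" "t \<le> 1"
    define v where "v = (1 - t) *\<^sub>R z + t *\<^sub>R y"
    have vD: "v \<in> D" unfolding v_def using D zD y t by (intro convexD) auto
    have Gv: "G v \<le> (1 - t) * G z + t * G y"
      unfolding v_def using G zD y t by (intro convex_onD) auto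
    have "v - u = (z - u) + t *\<^sub>R (y - z)" unfolding v_def by (simp add: algebra_simps)
    then have "diag_sqrt w (v - u) = A + t *\<^sub>R B" unfolding A_def B_def by (simp only: W.add W.scale)
    then have "(norm (diag_sqrt w (v - u)))^2 = (norm A)^2 + 2 * t * inner A B + t^2 * (norm B)^2"
      unfolding power2_norm_eq_inner
      by (simp add: inner_add_left inner_add_right inner_commute power2_eq_square algebra_simps)
    then have "t * G z \<le> t * (G y + inner A B + t * ((norm B)^2 / 2))"
      using min[OF vD] Gv by (simp add: algebra_simps power2_eq_square)
    then show "G z \<le> G y + inner A B + t * ((norm B)^2 / 2)" using t by simp
  qed
qed

lemma proxset_nonexpansive:
  assumes D: "convex D" and G: "convex_on D G" and w: "\<And>j. 0 \<le> w j"
    and z1: "z1 \<in> proxset D G w u1" and z2: "z2 \<in> proxset D G w u2"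
  shows "wnormsq w (z1 - z2) \<le> wnormsq w (u1 - u2)"
proof -
  interpret W: linear "diag_sqrt w" by (rule linear_diag_sqrt)
  have zD: "z1 \<in> D" "z2 \<in> D" using z1 z2 by (simp_all add: proxset_def)
  define e where "e = diag_sqrt w (z1 - z2)"
  define h where "h = diag_sqrt w (u1 - u2)"
  define r where "r = diag_sqrt w (u2 - z2)"
  have "diag_sqrt w (z1 - u1) = e - r - h" "diag_sqrt w (z2 - z1) = - e" "diag_sqrt w (z2 - u2) = - r"
    unfolding e_def h_def r_def W.diff[symmetric] W.neg[symmetric] by (simp_all add: algebra_simps)
  then have "0 \<le> inner (e - r - h) (- e) + inner (- r) e"
    using proxset_variational_ineq[OF D G w z1 zD(2)] proxset_variational_ineq[OF D G w z2 zD(1)]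
    by (simp add: e_def[symmetric])
  then have "(norm e)^2 \<le> inner h e"
    by (simp add: power2_norm_eq_inner inner_diff_left inner_diff_right inner_commute)
  also have "\<dots> \<le> norm h * norm e" by (rule norm_cauchy_schwarz)
  finally have "norm e \<le> norm h"
    by (cases "norm e = 0") (auto simp: power2_eq_square)
  then have "(norm e)^2 \<le> (norm h)^2" by (simp add: power_mono)
  then show ?thesis unfolding e_def h_def norm_diag_sqrt[OF w] .
qed

lemma blkproj_nth [simp]: "blkproj blk i u $ j = (if blk j = i then u $ j else 0)"
  by (simp add: blkproj_def)

lemma blkproj_idem [simp]: "blkproj blk i (blkproj blk i v) = blkproj blk i v"
  by (simp add: vec_eq_iff)

lemma linear_blkproj: "linear (blkproj blk i)"
  by (rule linearI) (simp_all add: vec_eq_iff)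

lemma inner_eq_inner_blkproj:
  assumes "\<And>j. blk j \<noteq> i \<Longrightarrow> a $ j = 0"
  shows "inner a v = inner a (blkproj blk i v)"
  unfolding inner_vec_def using assms by (intro sum.cong) auto

lemma norm_blkproj_sq: "(norm (blkproj blk i v))^2 = (\<Sum>j\<in>UNIV. if blk j = i then (v $ j)^2 else 0)"
  unfolding power2_norm_eq_inner inner_vec_def by (intro sum.cong) (auto simp: power2_eq_square)

lemma convex_on_along_line:
  fixes h :: "'a::real_vector \<Rightarrow> real"
  assumes "convex_on UNIV h"
  shows "convex_on UNIV (h \<circ> (\<lambda>s. x + s *\<^sub>R d))"
  unfolding convex_on_def
proof (intro conjI ballI allI impI)
  fix a b u v :: real assume uv: "u \<ge> 0" "v \<ge> 0" "u + v = 1"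
  have "x + (u *\<^sub>R a + v *\<^sub>R b) *\<^sub>R d = u *\<^sub>R (x + a *\<^sub>R d) + v *\<^sub>R (x + b *\<^sub>R d)"
    using uv by (simp add: algebra_simps flip: scaleR_add_left)
  then show "(h \<circ> (\<lambda>s. x + s *\<^sub>R d)) (u *\<^sub>R a + v *\<^sub>R b)
      \<le> u * (h \<circ> (\<lambda>s. x + s *\<^sub>R d)) a + v * (h \<circ> (\<lambda>s. x + s *\<^sub>R d)) b"
    using assms uv unfolding convex_on_def by auto
qed simp

locale block_smooth_strongly_convex =
  fixes N :: nat
    and blk :: "'n::finite \<Rightarrow> nat"
    and f :: "nat \<Rightarrow> real^'n \<Rightarrow> real" and df :: "nat \<Rightarrow> real^'n \<Rightarrow> real^'n"
    and L \<mu> :: "nat \<Rightarrow> real"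
  assumes N: "N \<ge> 1"
    and blk_range: "\<forall>j. blk j \<in> {1..N}"
    and blk_nonempty: "\<forall>i\<in>{1..N}. \<exists>j. blk j = i"
    and f_block: "\<forall>i\<in>{1..N}. \<forall>u v. blkproj blk i u = blkproj blk i v \<longrightarrow> f i u = f i v"
    and f_diff: "\<forall>i\<in>{1..N}. \<forall>u. (f i has_derivative (\<lambda>h. inner (df i u) h)) (at u)"
    and f_lip: "\<forall>i\<in>{1..N}. \<forall>u v. norm (df i u - df i v) \<le> L i * norm (blkproj blk i (u - v))"
    and f_strong: "\<forall>i\<in>{1..N}. convex_on UNIV (\<lambda>u. f i u - \<mu> i / 2 * (norm (blkproj blk i u))^2)"
begin

abbreviation P :: "nat \<Rightarrow> real^'n \<Rightarrow> real^'n" where "P i \<equiv> blkproj blk i"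

sublocale P: linear "P i" by (rule linear_blkproj)

lemma sum_blocks_norm_sq:
  "(\<Sum>i\<in>{1..N}. h i * (norm (P i v))^2) = (\<Sum>j\<in>UNIV. h (blk j) * (v $ j)^2)"
proof -
  have "(\<Sum>i\<in>{1..N}. h i * (norm (P i v))^2)
      = (\<Sum>j\<in>UNIV. \<Sum>i\<in>{1..N}. if blk j = i then h i * (v $ j)^2 else 0)"
    unfolding norm_blkproj_sq sum_distrib_left by (subst sum.swap) (simp add: if_distrib cong: if_cong)
  also have "\<dots> = (\<Sum>j\<in>UNIV. h (blk j) * (v $ j)^2)"
    using blk_range by (intro sum.cong) (simp_all add: sum.delta')
  finally show ?thesis .
qed

lemma has_real_derivative_along_line:
  assumes i: "i \<in> {1..N}"
  shows "((\<lambda>s. f i (u + s *\<^sub>R d)) has_real_derivative inner (df i (u + t *\<^sub>R d)) d) (at t)"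
proof -
  have "((\<lambda>s. u + s *\<^sub>R d) has_derivative (\<lambda>s. s *\<^sub>R d)) (at t)"
    by (auto intro!: derivative_eq_intros)
  from has_derivative_compose[OF this] f_diff i
  have "((\<lambda>s. f i (u + s *\<^sub>R d)) has_derivative (\<lambda>s. inner (df i (u + t *\<^sub>R d)) (s *\<^sub>R d))) (at t)"
    by blast
  then show ?thesis by (rule has_derivative_imp_has_field_derivative) simp
qed

lemma df_outside_block:
  assumes i: "i \<in> {1..N}" and j: "blk j \<noteq> i"
  shows "df i u $ j = 0"
proof -
  let ?e = "axis j (1::real) :: real^'n"
  have const: "f i (u + s *\<^sub>R ?e) = f i u" for s
    using f_block i j by (auto simp: vec_eq_iff axis_def)
  have "((\<lambda>s. f i u) has_real_derivative inner (df i u) ?e) (at 0)"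
    using has_real_derivative_along_line[OF i, of u ?e 0] by (simp add: const)
  then have "inner (df i u) ?e = 0" using DERIV_const DERIV_unique by blast
  then show ?thesis by (simp add: inner_axis)
qed

lemma blkproj_df: "i \<in> {1..N} \<Longrightarrow> P i (df i u) = df i u"
  using df_outside_block by (auto simp: vec_eq_iff)

lemma inner_df_blkproj: "i \<in> {1..N} \<Longrightarrow> inner (df i u) v = inner (df i u) (P i v)"
  by (rule inner_eq_inner_blkproj) (rule df_outside_block)

lemma df_eq_if_blkproj_eq: "i \<in> {1..N} \<Longrightarrow> P i u = P i v \<Longrightarrow> df i u = df i v"
  using f_lip by (metis P.diff diff_self mult_zero_right norm_le_zero_iff norm_zero eq_iff_diff_eq_0)

lemma block_descent:
  assumes i: "i \<in> {1..N}"
  shows "f i y \<le> f i x + inner (df i x) (y - x) + L i / 2 * (norm (P i (y - x)))^2"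
proof -
  define d where "d = y - x"
  define n2 where "n2 = (norm (P i d))^2"
  define \<phi> where "\<phi> s = f i (x + s *\<^sub>R d) - s * inner (df i x) d - L i / 2 * s^2 * n2" for s
  have "\<phi> 1 \<le> \<phi> 0"
  proof (rule DERIV_nonpos_imp_nonincreasing[of 0 1 \<phi>])
    fix s :: real assume s: "0 \<le> s" "s \<le> 1"
    let ?D = "inner (df i (x + s *\<^sub>R d)) d - inner (df i x) d - L i / 2 * (2 * s) * n2"
    have "(\<phi> has_real_derivative ?D) (at s)"
      unfolding \<phi>_def
      by (rule derivative_eq_intros has_real_derivative_along_line[OF i] refl | simp)+
    moreover have "?D \<le> 0"
    proof -
      have "inner (df i (x + s *\<^sub>R d)) d - inner (df i x) d = inner (df i (x + s *\<^sub>R d) - df i x) (P i d)"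
        using inner_df_blkproj[OF i] by (simp add: inner_diff_left)
      also have "\<dots> \<le> norm (df i (x + s *\<^sub>R d) - df i x) * norm (P i d)"
        by (rule norm_cauchy_schwarz)
      also have "\<dots> \<le> L i * norm (P i (s *\<^sub>R d)) * norm (P i d)"
        using f_lip[rule_format, OF i, of "x + s *\<^sub>R d" x] by (intro mult_right_mono) simp_all
      also have "\<dots> = L i * s * n2"
        using s by (simp add: P.scale n2_def power2_eq_square)
      finally show ?thesis by simp
    qed
    ultimately show "\<exists>y. (\<phi> has_real_derivative y) (at s) \<and> y \<le> 0" by blast
  qed simp
  then show ?thesis by (simp add: \<phi>_def d_def n2_def)
qed

lemma block_strong_convexity:
  assumes i: "i \<in> {1..N}"
  shows "f i x + inner (df i x) (y - x) + \<mu> i / 2 * (norm (P i (y - x)))^2 \<le> f i y"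
proof -
  define d where "d = y - x"
  define A where "A = (norm (P i x))^2"
  define B where "B = inner (P i x) (P i d)"
  define C where "C = (norm (P i d))^2"
  define h where "h w = f i w - \<mu> i / 2 * (norm (P i w))^2" for w
  define g where "g s = f i (x + s *\<^sub>R d) - \<mu> i / 2 * (A + 2 * s * B + s^2 * C)" for s
  have g_eq: "g = h \<circ> (\<lambda>s. x + s *\<^sub>R d)"
  proof
    fix s
    have "(norm (P i (x + s *\<^sub>R d)))^2 = A + 2 * s * B + s^2 * C"
      unfolding A_def B_def C_def P.add P.scale power2_norm_eq_inner
      by (simp add: inner_add_left inner_add_right inner_commute power2_eq_square algebra_simps)
    then show "g s = (h \<circ> (\<lambda>s. x + s *\<^sub>R d)) s" by (simp add: g_def h_def)
  qed
  have "convex_on UNIV g"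
    unfolding g_eq h_def using f_strong i convex_on_along_line by blast
  moreover have "(g has_real_derivative (inner (df i (x + 0 *\<^sub>R d)) d - \<mu> i / 2 * (2 * B + 2 * 0 * C))) (at 0)"
    unfolding g_def
    by (rule derivative_eq_intros has_real_derivative_along_line[OF i] refl | simp)+
  ultimately have "(inner (df i x) d - \<mu> i * B) * (1 - 0) \<le> g 1 - g 0"
    by (intro convex_on_imp_above_tangent) auto
  then show ?thesis by (simp add: g_def d_def C_def algebra_simps)
qed

lemma strong_convexity_le_smoothness:
  assumes i: "i \<in> {1..N}"
  shows "\<mu> i \<le> L i"
proof -
  obtain j where j: "blk j = i" using blk_nonempty i by blast
  define e where "e = (axis j (1::real) :: real^'n)"
  have "P i e = e" using j by (auto simp: vec_eq_iff e_def axis_def)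
  then have "norm (P i (e - 0)) = 1" by (simp add: e_def)
  then show ?thesis
    using block_descent[OF i, of e 0] block_strong_convexity[OF i, of 0 e] by simp
qed

lemma block_three_point:
  assumes i: "i \<in> {1..N}"
  shows "f i x + inner (df i x) (w - x) + \<mu> i / 2 * (norm (P i (w - x)))^2
    \<le> f i y + inner (df i y) (w - y) + L i / 2 * (norm (P i (w - y)))^2"
  using block_strong_convexity[OF i, of x w] block_descent[OF i, of w y] by linarith

text \<open>Cocoercivity of the gradient of the convex, (L - \<mu>)-smooth function
  f - \<mu>/2 |P x|^2, stated for every step size s so that the case L = \<mu> needs no division.\<close>
lemma block_cocoercive:
  fixes x y :: "real^'n"
  assumes i: "i \<in> {1..N}"
  defines "p \<equiv> P i (y - x)"
  defines "g \<equiv> df i y - df i x - \<mu> i *\<^sub>R p"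
  shows "(2 * s - (L i - \<mu> i) * s^2) * (norm g)^2 \<le> inner g p"
proof -
  have Pg: "P i g = g" unfolding g_def p_def by (simp add: P.diff P.scale blkproj_df[OF i])
  define a where "a = inner g p"
  define pp where "pp = (norm p)^2"
  define gg where "gg = (norm g)^2"
  have "P i ((y - s *\<^sub>R g) - x) = p - s *\<^sub>R g" "P i ((y - s *\<^sub>R g) - y) = - (s *\<^sub>R g)"
    "P i ((x + s *\<^sub>R g) - y) = - (p - s *\<^sub>R g)" "P i ((x + s *\<^sub>R g) - x) = s *\<^sub>R g"
    unfolding p_def by (simp_all add: P.diff P.add P.scale P.neg Pg algebra_simps)
  moreover have "(norm (s *\<^sub>R g))^2 = s^2 * gg" by (simp add: gg_def power_mult_distrib)
  ultimately have
    TP1: "f i x + inner (df i x) ((y - s *\<^sub>R g) - x) + \<mu> i / 2 * (norm (p - s *\<^sub>R g))^2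
      \<le> f i y + inner (df i y) ((y - s *\<^sub>R g) - y) + L i / 2 * (s^2 * gg)" and
    TP2: "f i y + inner (df i y) ((x + s *\<^sub>R g) - y) + \<mu> i / 2 * (norm (p - s *\<^sub>R g))^2
      \<le> f i x + inner (df i x) ((x + s *\<^sub>R g) - x) + L i / 2 * (s^2 * gg)"
    using block_three_point[OF i, of x "y - s *\<^sub>R g" y] block_three_point[OF i, of y "x + s *\<^sub>R g" x]
    by (simp_all only: norm_minus_cancel)
  have "(norm (p - s *\<^sub>R g))^2 = pp - 2 * s * a + s^2 * gg"
    unfolding pp_def gg_def a_def power2_norm_eq_inner
    by (simp add: inner_diff_left inner_diff_right inner_commute power2_eq_square algebra_simps)
  with TP1 TP2 have sum: "2 * s * inner (df i y - df i x) g - inner (df i y - df i x) (y - x)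
      + \<mu> i * (pp - 2 * s * a + s^2 * gg) \<le> L i * s^2 * gg"
    by (simp add: inner_diff_right inner_add_right inner_diff_left algebra_simps)
  have "inner (df i y - df i x) (y - x) = a + \<mu> i * pp"
    using inner_df_blkproj[OF i, of y "y - x"] inner_df_blkproj[OF i, of x "y - x"]
    by (simp add: inner_diff_left g_def a_def pp_def p_def inner_add_left power2_norm_eq_inner)
  moreover have "inner (df i y - df i x) g = gg + \<mu> i * a"
  proof -
    have "df i y - df i x = g + \<mu> i *\<^sub>R p" by (simp add: g_def)
    then show ?thesis by (simp add: a_def gg_def inner_add_left inner_add_right power2_norm_eq_inner inner_commute)
  qed
  ultimately have "2 * s * gg - (L i - \<mu> i) * s^2 * gg \<le> a"
    using sum by (simp add: algebra_simps)
  then show ?thesis by (simp add: a_def gg_def algebra_simps)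
qed

lemma forward_step_block_contraction:
  fixes x y :: "real^'n"
  assumes i: "i \<in> {1..N}" and \<alpha>: "0 < \<alpha>" "\<alpha> * L i < 1"
  shows "(norm (P i (y - x) - \<alpha> *\<^sub>R (df i y - df i x)))^2 \<le> (1 - \<alpha> * \<mu> i)^2 * (norm (P i (y - x)))^2"
proof -
  define q where "q = 1 - \<alpha> * \<mu> i"
  have "\<alpha> * \<mu> i \<le> \<alpha> * L i"
    using strong_convexity_le_smoothness[OF i] \<alpha> by (intro mult_left_mono) auto
  then have q: "0 < q" "(L i - \<mu> i) * \<alpha> < q"
    using \<alpha> unfolding q_def by (linarith, simp add: algebra_simps)
  define s where "s = \<alpha> / q"
  define p where "p = P i (y - x)"
  define g where "g = df i y - df i x - \<mu> i *\<^sub>R p"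
  have coco: "(2 * s - (L i - \<mu> i) * s^2) * (norm g)^2 \<le> inner g p"
    unfolding g_def p_def by (rule block_cocoercive[OF i])
  have "\<alpha>^2 \<le> 2 * \<alpha> * q * (2 * s - (L i - \<mu> i) * s^2)"
  proof -
    have "2 * \<alpha> * q * (2 * s - (L i - \<mu> i) * s^2) = \<alpha>^2 * (4 - 2 * ((L i - \<mu> i) * \<alpha>) / q)"
      unfolding s_def using q by (simp add: field_simps power2_eq_square)
    moreover have "2 * ((L i - \<mu> i) * \<alpha>) / q \<le> 3" using q by (simp add: field_simps)
    ultimately show ?thesis by (simp add: mult_le_cancel_left1)
  qed
  then have "\<alpha>^2 * (norm g)^2 \<le> 2 * \<alpha> * q * inner g p"
    using coco \<alpha> q by (smt (verit) mult_left_mono mult_right_mono mult_pos_pos zero_le_power2 mult.assoc)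
  moreover have "P i (y - x) - \<alpha> *\<^sub>R (df i y - df i x) = q *\<^sub>R p - \<alpha> *\<^sub>R g"
    unfolding g_def q_def p_def by (simp add: algebra_simps)
  moreover have "(norm (q *\<^sub>R p - \<alpha> *\<^sub>R g))^2 = q^2 * (norm p)^2 - 2 * \<alpha> * q * inner g p + \<alpha>^2 * (norm g)^2"
    unfolding power2_norm_eq_inner
    by (simp add: inner_diff_left inner_diff_right inner_commute power2_eq_square algebra_simps)
  ultimately show ?thesis unfolding q_def p_def by simp
qed

lemma wnormsq_blocks: "wnormsq (\<lambda>j. h (blk j)) v = (\<Sum>i\<in>{1..N}. h i * (norm (P i v))^2)"
  unfolding wnormsq_def sum_blocks_norm_sq ..

lemma Fsum_plus_inner_gradF:
  "Fsum N f x + inner (gradF N df x) v = (\<Sum>i\<in>{1..N}. f i x + inner (df i x) v) / real N"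
  by (simp add: Fsum_def gradF_def inner_sum_left sum.distrib add_divide_distrib)

lemma Fsum_linearization_gap:
  "Fsum N f y - (Fsum N f x + inner (gradF N df x) (y - x))
    = (\<Sum>i\<in>{1..N}. f i y - (f i x + inner (df i x) (y - x))) / real N"
  by (simp add: Fsum_def gradF_def inner_sum_left sum_subtractf sum.distrib diff_divide_distrib add_divide_distrib)

lemma Fsum_descent:
  "Fsum N f y \<le> Fsum N f x + inner (gradF N df x) (y - x) + 1/2 * wnormsq (\<lambda>j. L (blk j) / real N) (y - x)"
proof -
  have "(\<Sum>i\<in>{1..N}. f i y - (f i x + inner (df i x) (y - x))) \<le> (\<Sum>i\<in>{1..N}. L i / 2 * (norm (P i (y - x)))^2)"
    by (intro sum_mono, drule block_descent[of _ y x]) linarith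
  also have "\<dots> = real N * (1/2 * wnormsq (\<lambda>j. L (blk j) / real N) (y - x))"
    using N wnormsq_blocks[of "\<lambda>i. L i / real N"] by (simp add: sum_distrib_left)
  finally have "(\<Sum>i\<in>{1..N}. f i y - (f i x + inner (df i x) (y - x))) / real N
      \<le> 1/2 * wnormsq (\<lambda>j. L (blk j) / real N) (y - x)"
    using N by (simp add: pos_divide_le_eq mult.commute)
  then show ?thesis using Fsum_linearization_gap[of y x] by linarith
qed

lemma Fsum_strong_convexity:
  "Fsum N f x + inner (gradF N df x) (y - x) + 1/2 * wnormsq (\<lambda>j. \<mu> (blk j) / real N) (y - x) \<le> Fsum N f y"
proof -
  have "real N * (1/2 * wnormsq (\<lambda>j. \<mu> (blk j) / real N) (y - x)) = (\<Sum>i\<in>{1..N}. \<mu> i / 2 * (norm (P i (y - x)))^2)"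
    using N wnormsq_blocks[of "\<lambda>i. \<mu> i / real N"] by (simp add: sum_distrib_left)
  also have "\<dots> \<le> (\<Sum>i\<in>{1..N}. f i y - (f i x + inner (df i x) (y - x)))"
    by (intro sum_mono, drule block_strong_convexity[of _ x y]) linarith
  finally have "1/2 * wnormsq (\<lambda>j. \<mu> (blk j) / real N) (y - x)
      \<le> (\<Sum>i\<in>{1..N}. f i y - (f i x + inner (df i x) (y - x))) / real N"
    using N by (simp add: pos_le_divide_eq mult.commute)
  then show ?thesis using Fsum_linearization_gap[of y x] by linarith
qed

end

locale block_coordinate_problem = block_smooth_strongly_convex N blk f df L \<mu>
  for N :: nat and blk :: "'n::finite \<Rightarrow> nat" and f df L \<mu> +
  fixes \<gamma> :: "nat \<Rightarrow> real"
    and domG :: "(real^'n) set" and G :: "real^'n \<Rightarrow> real"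
    and xs :: "real^'n"
  assumes L_pos: "\<forall>i\<in>{1..N}. L i > 0"
    and \<gamma>_range: "\<forall>i\<in>{1..N}. 0 < \<gamma> i \<and> \<gamma> i < real N / L i"
    and \<mu>_pos: "\<forall>i\<in>{1..N}. \<mu> i > 0"
    and G_convex: "convex domG" "convex_on domG G"
    and xs_min: "xs \<in> domG" "\<forall>y\<in>domG. Fsum N f xs + G xs \<le> Fsum N f y + G y"
begin

abbreviation \<Gamma>inv :: "'n \<Rightarrow> real" where "\<Gamma>inv \<equiv> \<lambda>j. 1 / \<gamma> (blk j)"
abbreviation \<Phi> :: "real^'n \<Rightarrow> real" where "\<Phi> u \<equiv> Fsum N f u + G u"
abbreviation fbe :: "real^'n \<Rightarrow> real" where "fbe x \<equiv> FBE N blk \<gamma> f df domG G x"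
abbreviation fb_map :: "real^'n \<Rightarrow> (real^'n) set" where "fb_map x \<equiv> Tmap N blk \<gamma> df domG G x"
abbreviation forward :: "real^'n \<Rightarrow> real^'n" where
  "forward x \<equiv> x - (\<chi> j. \<gamma> (blk j) * gradF N df x $ j)"
abbreviation fb_model :: "real^'n \<Rightarrow> real^'n \<Rightarrow> real" where
  "fb_model x w \<equiv> Fsum N f x + inner (gradF N df x) (w - x) + G w + 1/2 * wnormsq \<Gamma>inv (w - x)"

lemma block_parameters:
  assumes "i \<in> {1..N}"
  shows "0 < \<gamma> i" "0 < \<mu> i" "\<gamma> i * L i < real N"
  using assms \<gamma>_range L_pos \<mu>_pos by (auto simp: field_simps)

lemma \<gamma>_pos: "0 < \<gamma> (blk j)"
  using block_parameters(1) blk_range by blast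

lemma \<Gamma>inv_nonneg: "0 \<le> \<Gamma>inv j"
  using \<gamma>_pos[of j] by simp

lemma gradF_nth: "gradF N df x $ j = df (blk j) x $ j / real N"
proof -
  have "(\<Sum>i\<in>{1..N}. df i x $ j) = (\<Sum>i\<in>{1..N}. if i = blk j then df (blk j) x $ j else 0)"
    by (rule sum.cong) (auto simp: df_outside_block)
  then show ?thesis using blk_range by (simp add: gradF_def)
qed

lemma fb_model_eq_prox_objective:
  "fb_model x w = G w + 1/2 * wnormsq \<Gamma>inv (w - forward x)
    + (Fsum N f x - 1/2 * (\<Sum>j\<in>UNIV. \<gamma> (blk j) * (gradF N df x $ j)^2))"
proof -
  have "\<Gamma>inv j * ((w - forward x) $ j)^2
      = \<Gamma>inv j * ((w - x) $ j)^2 + 2 * (gradF N df x $ j * (w - x) $ j) + \<gamma> (blk j) * (gradF N df x $ j)^2" for j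
    using \<gamma>_pos[of j] by (simp add: field_simps power2_eq_square)
  then have "wnormsq \<Gamma>inv (w - forward x)
      = wnormsq \<Gamma>inv (w - x) + 2 * inner (gradF N df x) (w - x) + (\<Sum>j\<in>UNIV. \<gamma> (blk j) * (gradF N df x $ j)^2)"
    unfolding wnormsq_def inner_vec_def by (simp add: sum.distrib sum_distrib_left)
  then show ?thesis by linarith
qed

lemma fb_map_minimizes_model:
  assumes "z \<in> fb_map x"
  shows "z \<in> domG" "\<And>w. w \<in> domG \<Longrightarrow> fb_model x z \<le> fb_model x w"
  using assms unfolding fb_model_eq_prox_objective by (auto simp: Tmap_def proxset_def)

lemma fbe_eq_model:
  assumes "z \<in> fb_map x"
  shows "fbe x = fb_model x z"
  unfolding FBE_def by (rule cInf_eq_minimum) (use fb_map_minimizes_model[OF assms] in auto)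

definition \<delta> :: real where "\<delta> = Min ((\<lambda>i. \<gamma> i * \<mu> i / real N) ` {1..N})"
definition \<Delta> :: real where "\<Delta> = Max ((\<lambda>i. \<gamma> i * L i / real N) ` {1..N})"

lemma \<delta>_le: "i \<in> {1..N} \<Longrightarrow> \<delta> \<le> \<gamma> i * \<mu> i / real N"
  unfolding \<delta>_def by (rule Min_le) auto

lemma \<Delta>_ge: "i \<in> {1..N} \<Longrightarrow> \<gamma> i * L i / real N \<le> \<Delta>"
  unfolding \<Delta>_def by (rule Max_ge) auto

lemma \<delta>_pos: "0 < \<delta>"
proof -
  have "\<delta> \<in> (\<lambda>i. \<gamma> i * \<mu> i / real N) ` {1..N}" unfolding \<delta>_def using N by (intro Min_in) auto
  then show ?thesis using block_parameters N by auto
qed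

lemma \<Delta>_lt_1: "\<Delta> < 1"
proof -
  have "\<Delta> \<in> (\<lambda>i. \<gamma> i * L i / real N) ` {1..N}" unfolding \<Delta>_def using N by (intro Max_in) auto
  then show ?thesis using block_parameters(3) N by auto
qed

lemma \<delta>_le_\<Delta>: "\<delta> \<le> \<Delta>"
proof -
  have i: "1 \<in> {1..N}" using N by simp
  have "\<gamma> 1 * \<mu> 1 / real N \<le> \<gamma> 1 * L 1 / real N"
    using strong_convexity_le_smoothness[OF i] block_parameters[OF i]
    by (intro divide_right_mono mult_left_mono) auto
  then show ?thesis using \<delta>_le[OF i] \<Delta>_ge[OF i] by linarith
qed

lemma \<delta>_lt_1: "\<delta> < 1"
  using \<delta>_le_\<Delta> \<Delta>_lt_1 by linarith

lemma \<delta>_\<Gamma>inv_le_\<mu>: "\<delta> * \<Gamma>inv j \<le> \<mu> (blk j) / real N"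
  using mult_right_mono[OF \<delta>_le[of "blk j"], of "\<Gamma>inv j"] blk_range \<gamma>_pos[of j] by simp

lemma L_le_\<Delta>_\<Gamma>inv: "L (blk j) / real N \<le> \<Delta> * \<Gamma>inv j"
  using mult_right_mono[OF \<Delta>_ge[of "blk j"], of "\<Gamma>inv j"] blk_range \<gamma>_pos[of j] by simp

lemma blkproj_forward_diff:
  assumes i: "i \<in> {1..N}"
  shows "P i (forward x1 - forward x2) = P i (x1 - x2) - (\<gamma> i / real N) *\<^sub>R (df i x1 - df i x2)"
  unfolding vec_eq_iff using df_outside_block[OF i]
  by (auto simp: gradF_nth algebra_simps diff_divide_distrib)

lemma forward_contraction:
  "wnormsq \<Gamma>inv (forward x1 - forward x2) \<le> (1 - \<delta>)^2 * wnormsq \<Gamma>inv (x1 - x2)"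
proof -
  have "(norm (P i (forward x1 - forward x2)))^2 \<le> (1 - \<delta>)^2 * (norm (P i (x1 - x2)))^2"
    if i: "i \<in> {1..N}" for i
  proof -
    define \<alpha> where "\<alpha> = \<gamma> i / real N"
    note par = block_parameters[OF i]
    have \<alpha>: "0 < \<alpha>" "\<alpha> * L i < 1" "\<delta> \<le> \<alpha> * \<mu> i"
      using par N \<delta>_le[OF i] by (auto simp: \<alpha>_def field_simps)
    moreover have "\<alpha> * \<mu> i \<le> \<alpha> * L i"
      using strong_convexity_le_smoothness[OF i] \<alpha> by (intro mult_left_mono) auto
    ultimately have "(1 - \<alpha> * \<mu> i)^2 \<le> (1 - \<delta>)^2" by (intro power_mono) linarith+
    then show ?thesis
      using forward_step_block_contraction[OF i \<alpha>(1,2), of x1 x2]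
      unfolding blkproj_forward_diff[OF i] \<alpha>_def
      by (meson mult_right_mono order_trans zero_le_power2)
  qed
  then have "(\<Sum>i\<in>{1..N}. 1 / \<gamma> i * (norm (P i (forward x1 - forward x2)))^2)
      \<le> (\<Sum>i\<in>{1..N}. 1 / \<gamma> i * ((1 - \<delta>)^2 * (norm (P i (x1 - x2)))^2))"
    using block_parameters(1) by (intro sum_mono mult_left_mono) (auto intro: less_imp_le)
  then show ?thesis
    unfolding wnormsq_blocks[of "\<lambda>i. 1 / \<gamma> i"] sum_distrib_left by (simp add: mult.left_commute)
qed

lemma fb_map_contraction:
  assumes "z1 \<in> fb_map x1" "z2 \<in> fb_map x2"
  shows "wnormsq \<Gamma>inv (z1 - z2) \<le> (1 - \<delta>)^2 * wnormsq \<Gamma>inv (x1 - x2)"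
  using proxset_nonexpansive[OF G_convex \<Gamma>inv_nonneg assms[unfolded Tmap_def]] forward_contraction
  by (rule order_trans)

lemma Phi_le_fbe:
  assumes z: "z \<in> fb_map x"
  shows "\<Phi> z \<le> fbe x"
proof -
  have "L (blk j) / real N \<le> \<Gamma>inv j" for j
  proof -
    have "\<Delta> * \<Gamma>inv j \<le> 1 * \<Gamma>inv j"
      using \<Delta>_lt_1 \<Gamma>inv_nonneg[of j] by (intro mult_right_mono) auto
    then show ?thesis using L_le_\<Delta>_\<Gamma>inv[of j] by linarith
  qed
  then have "wnormsq (\<lambda>j. L (blk j) / real N) (z - x) \<le> wnormsq \<Gamma>inv (z - x)"
    by (rule wnormsq_mono_weights)
  then show ?thesis using Fsum_descent[of z x] fbe_eq_model[OF z] by simp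
qed

lemma min_le_fbe: "z \<in> fb_map x \<Longrightarrow> \<Phi> xs \<le> fbe x"
  using Phi_le_fbe xs_min fb_map_minimizes_model(1) by fastforce

lemma fbe_le_Phi:
  assumes "z \<in> fb_map x" "x \<in> domG"
  shows "fbe x \<le> \<Phi> x"
  using fbe_eq_model[OF assms(1)] fb_map_minimizes_model(2)[OF assms] by (simp add: wnormsq_def)

lemma quadratic_growth:
  assumes z: "z \<in> domG"
  shows "1/2 * wnormsq (\<lambda>j. \<mu> (blk j) / real N) (z - xs) \<le> \<Phi> z - \<Phi> xs"
proof -
  define v where "v = z - xs"
  define C where "C = wnormsq (\<lambda>j. L (blk j) / real N) v"
  have "G xs \<le> G z + inner (gradF N df xs) v"
  proof (rule le_of_forall_le_add_mult[where c = "C / 2"])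
    fix t :: real assume t: "0 < t" "t \<le> 1"
    define w where "w = (1 - t) *\<^sub>R xs + t *\<^sub>R z"
    have "w \<in> domG" unfolding w_def using G_convex(1) z xs_min(1) t by (intro convexD) auto
    then have "\<Phi> xs \<le> \<Phi> w" using xs_min(2) by blast
    moreover have "G w \<le> (1 - t) * G xs + t * G z"
      unfolding w_def using G_convex(2) z xs_min(1) t by (intro convex_onD) auto
    moreover have "w - xs = t *\<^sub>R v" unfolding w_def v_def by (simp add: algebra_simps)
    then have "Fsum N f w \<le> Fsum N f xs + t * inner (gradF N df xs) v + 1/2 * (t^2 * C)"
      using Fsum_descent[of w xs] by (simp add: C_def wnormsq_scaleR)
    ultimately have "t * G xs \<le> t * (G z + inner (gradF N df xs) v + t * (C / 2))"
      by (simp add: algebra_simps power2_eq_square)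
    then show "G xs \<le> G z + inner (gradF N df xs) v + t * (C / 2)" using t by simp
  qed
  then show ?thesis using Fsum_strong_convexity[of xs z] unfolding v_def by linarith
qed

lemma fbe_error_bound:
  assumes z: "z \<in> fb_map x"
  shows "fbe x - \<Phi> xs \<le> (1 - \<delta>) / (2 * \<delta>) * wnormsq \<Gamma>inv (z - x)"
proof -
  define a where "a j = (z - x) $ j" for j
  define b where "b j = (xs - x) $ j" for j
  have prox: "G z \<le> G xs + (\<Sum>j\<in>UNIV. \<Gamma>inv j * (z - forward x) $ j * (xs - z) $ j)"
    using proxset_variational_ineq[OF G_convex \<Gamma>inv_nonneg z[unfolded Tmap_def] xs_min(1)]
    unfolding inner_diag_sqrt[OF \<Gamma>inv_nonneg] .
  have "inner (gradF N df x) (z - x) - inner (gradF N df x) (xs - x)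
      + (\<Sum>j\<in>UNIV. \<Gamma>inv j * (z - forward x) $ j * (xs - z) $ j)
      + 1/2 * wnormsq \<Gamma>inv (z - x) - 1/2 * wnormsq (\<lambda>j. \<mu> (blk j) / real N) (xs - x)
      = (\<Sum>j\<in>UNIV. gradF N df x $ j * a j - gradF N df x $ j * b j
          + \<Gamma>inv j * (z - forward x) $ j * (xs - z) $ j
          + 1/2 * (\<Gamma>inv j * (a j)^2) - 1/2 * (\<mu> (blk j) / real N * (b j)^2))"
    unfolding inner_vec_def wnormsq_def a_def b_def
    by (simp add: sum.distrib sum_subtractf sum_distrib_left)
  also have "\<dots> = (\<Sum>j\<in>UNIV. a j * b j * \<Gamma>inv j - (a j)^2 * \<Gamma>inv j / 2 - \<mu> (blk j) / real N * (b j)^2 / 2)"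
    using \<gamma>_pos[THEN less_imp_neq, THEN not_sym]
    by (intro sum.cong) (simp_all add: a_def b_def field_simps power2_eq_square)
  also have "\<dots> \<le> (\<Sum>j\<in>UNIV. (1 - \<delta>) / (2 * \<delta>) * (a j)^2 * \<Gamma>inv j)"
    using \<gamma>_pos \<delta>_pos \<delta>_\<Gamma>inv_le_\<mu> by (intro sum_mono quadratic_gap_le) auto
  also have "\<dots> = (1 - \<delta>) / (2 * \<delta>) * wnormsq \<Gamma>inv (z - x)"
    unfolding wnormsq_def a_def sum_distrib_left by (simp add: ac_simps)
  finally show ?thesis
    using fbe_eq_model[OF z] Fsum_strong_convexity[of x xs] prox by linarith
qed

lemma block_linearization_after_update:
  assumes i: "i \<in> {1..N}"
    and upd: "\<And>j. x' $ j = (if blk j \<in> S then z $ j else x $ j)"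
  shows "f i x' + inner (df i x') (z - x')
    \<le> f i x + inner (df i x) (z - x) + L i / 2 * (norm (P i (x' - x)))^2"
proof (cases "i \<in> S")
  case True
  then have Px': "P i x' = P i z" using upd by (simp add: vec_eq_iff)
  then have "inner (df i x') (z - x') = 0"
    using inner_df_blkproj[OF i, of x' "z - x'"] by (simp add: P.diff)
  moreover have "P i (x' - x) = P i (z - x)" using Px' by (simp add: P.diff)
  moreover have "f i x' = f i z" using f_block i Px' by blast
  ultimately show ?thesis using block_descent[OF i, of z x] by simp
next
  case False
  then have Px': "P i x' = P i x" using upd by (simp add: vec_eq_iff)
  then have "inner (df i x) (z - x') = inner (df i x) (z - x)"
    using inner_df_blkproj[OF i, of x] by (metis P.diff)
  moreover have "f i x' = f i x" using f_block i Px' by blast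
  moreover have "P i (x' - x) = 0" using Px' by (simp add: P.diff)
  ultimately show ?thesis using df_eq_if_blkproj_eq[OF i Px'] by simp
qed

lemma fbe_block_update_decrease:
  assumes z: "z \<in> fb_map x" and z': "z' \<in> fb_map x'"
    and upd: "\<And>j. x' $ j = (if blk j \<in> S then z $ j else x $ j)"
  shows "fbe x' \<le> fbe x - (1 - \<Delta>) / 2 * wnormsq \<Gamma>inv (x' - x)"
proof -
  have "(\<Sum>i\<in>{1..N}. f i x' + inner (df i x') (z - x'))
      \<le> (\<Sum>i\<in>{1..N}. f i x + inner (df i x) (z - x) + L i / 2 * (norm (P i (x' - x)))^2)"
    using block_linearization_after_update[OF _ upd] by (rule sum_mono)
  also have "\<dots> = (\<Sum>i\<in>{1..N}. f i x + inner (df i x) (z - x))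
      + real N * (1/2 * wnormsq (\<lambda>j. L (blk j) / real N) (x' - x))"
    using N wnormsq_blocks[of "\<lambda>i. L i / real N"] by (simp add: sum.distrib sum_distrib_left)
  finally have F: "Fsum N f x' + inner (gradF N df x') (z - x')
      \<le> Fsum N f x + inner (gradF N df x) (z - x) + 1/2 * wnormsq (\<lambda>j. L (blk j) / real N) (x' - x)"
    using N unfolding Fsum_plus_inner_gradF by (auto dest: divide_right_mono[of _ _ "real N"] simp: add_divide_distrib)
  have "wnormsq (\<lambda>j. L (blk j) / real N) (x' - x) \<le> wnormsq (\<lambda>j. \<Delta> * \<Gamma>inv j) (x' - x)"
    using L_le_\<Delta>_\<Gamma>inv by (rule wnormsq_mono_weights)
  moreover have "wnormsq \<Gamma>inv (z - x) = wnormsq \<Gamma>inv (z - x') + wnormsq \<Gamma>inv (x' - x)"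
    unfolding wnormsq_def sum.distrib[symmetric] by (rule sum.cong) (auto simp: upd)
  moreover have "fbe x' \<le> fb_model x' z"
    using fbe_eq_model[OF z'] fb_map_minimizes_model[OF z'] fb_map_minimizes_model(1)[OF z] by simp
  ultimately show ?thesis
    using F fbe_eq_model[OF z] unfolding wnormsq_scale_weights inner_diff_right by argo
qed

end

locale block_coordinate_iteration = block_coordinate_problem N blk f df L \<mu> \<gamma> domG G xs
  for N :: nat and blk :: "'n::finite \<Rightarrow> nat" and f df L \<mu> \<gamma> domG G xs +
  fixes x z :: "nat \<Rightarrow> real^'n" and I :: "nat \<Rightarrow> nat set"
  assumes z_T: "\<forall>k. z k \<in> Tmap N blk \<gamma> df domG G (x k)"
    and x_upd: "\<forall>k. \<forall>j. x (Suc k) $ j = (if blk j \<in> I (Suc k) then z k $ j else x k $ j)"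
begin

lemma z_in_fb_map: "z k \<in> fb_map (x k)"
  using z_T by blast

abbreviation step :: "nat \<Rightarrow> real^'n" where "step k \<equiv> x (Suc k) - x k"

definition sq_steps :: "nat \<Rightarrow> nat \<Rightarrow> real" where
  "sq_steps k0 T = (\<Sum>s<T. wnormsq \<Gamma>inv (step (k0 + s)))"

lemma sq_steps_nonneg: "0 \<le> sq_steps k0 T"
  unfolding sq_steps_def by (intro sum_nonneg wnormsq_nonneg \<Gamma>inv_nonneg)

lemma fbe_epoch_decrease:
  "fbe (x (k0 + t)) \<le> fbe (x k0) - (1 - \<Delta>) / 2 * sq_steps k0 t"
proof (induction t)
  case (Suc t)
  have "fbe (x (Suc (k0 + t))) \<le> fbe (x (k0 + t)) - (1 - \<Delta>) / 2 * wnormsq \<Gamma>inv (step (k0 + t))"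
    using x_upd by (intro fbe_block_update_decrease[OF z_in_fb_map z_in_fb_map]) blast
  then show ?case using Suc.IH by (simp add: sq_steps_def algebra_simps)
qed (simp add: sq_steps_def)

lemma x_unchanged:
  "(\<And>s. s < t \<Longrightarrow> blk j \<notin> I (Suc (k0 + s))) \<Longrightarrow> x (k0 + t) $ j = x k0 $ j"
  by (induction t) (simp_all add: x_upd)

lemma x_drift_eq_sum_steps: "x (k0 + t) $ j - x k0 $ j = (\<Sum>s<t. step (k0 + s) $ j)"
  by (induction t) simp_all

lemma drift_le_sq_steps:
  assumes drift: "\<And>j. (x (k0 + s) $ j - x k0 $ j)^2 \<le> B * (\<Sum>t<T. (step (k0 + t) $ j)^2)"
  shows "wnormsq \<Gamma>inv (x k0 - x (k0 + s)) \<le> B * sq_steps k0 T"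
proof -
  have "wnormsq \<Gamma>inv (x k0 - x (k0 + s)) \<le> (\<Sum>j\<in>UNIV. \<Gamma>inv j * (B * (\<Sum>t<T. (step (k0 + t) $ j)^2)))"
    unfolding wnormsq_def using drift \<Gamma>inv_nonneg
    by (intro sum_mono mult_left_mono) (auto simp: power2_commute)
  also have "\<dots> = B * sq_steps k0 T"
    unfolding sq_steps_def wnormsq_def sum_distrib_left
    by (subst sum.swap) (simp add: ac_simps)
  finally show ?thesis .
qed

lemma first_update_in_epoch:
  assumes cover: "\<forall>i\<in>{1..N}. \<exists>t<T. i \<in> I (Suc (k0 + t))"
  obtains \<tau> where "\<And>j. \<tau> j < T" "\<And>j. blk j \<in> I (Suc (k0 + \<tau> j))"
    "\<And>j s. s < \<tau> j \<Longrightarrow> blk j \<notin> I (Suc (k0 + s))"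
proof
  fix j
  obtain t where t: "t < T" "blk j \<in> I (Suc (k0 + t))" using cover blk_range by blast
  show "blk j \<in> I (Suc (k0 + (LEAST t. blk j \<in> I (Suc (k0 + t)))))" by (rule LeastI[of _ t]) (rule t(2))
  show "(LEAST t. blk j \<in> I (Suc (k0 + t))) < T" using Least_le[of _ t] t by fastforce
  show "s < (LEAST t. blk j \<in> I (Suc (k0 + t))) \<Longrightarrow> blk j \<notin> I (Suc (k0 + s))" for s
    by (rule not_less_Least)
qed

lemma residual_le_sq_steps:
  assumes cover: "\<forall>i\<in>{1..N}. \<exists>t<T. i \<in> I (Suc (k0 + t))" and "0 \<le> B"
    and drift: "\<And>s j. s < T \<Longrightarrow> (x (k0 + s) $ j - x k0 $ j)^2 \<le> B * (\<Sum>t<T. (step (k0 + t) $ j)^2)"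
  shows "wnormsq \<Gamma>inv (z k0 - x k0) \<le> (1 + sqrt (real T * B) * (1 - \<delta>))^2 * sq_steps k0 T"
proof -
  obtain \<tau> where \<tau>: "\<And>j. \<tau> j < T" "\<And>j. blk j \<in> I (Suc (k0 + \<tau> j))"
    "\<And>j s. s < \<tau> j \<Longrightarrow> blk j \<notin> I (Suc (k0 + s))"
    using first_update_in_epoch[OF cover] by blast
  define E where "E = sq_steps k0 T"
  define a where "a = (\<chi> j. step (k0 + \<tau> j) $ j)"
  define b where "b = (\<chi> j. (z k0 - z (k0 + \<tau> j)) $ j)"
  txt \<open>Before its first update at step \<tau> j, block j still holds its value in x k0.\<close>
  have zx: "z k0 - x k0 = a + b"
    using \<tau> x_upd x_unchanged[of "\<tau> _" _ k0] by (simp add: a_def b_def vec_eq_iff)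
  have na: "wnormsq \<Gamma>inv a \<le> E"
    unfolding a_def E_def sq_steps_def by (rule wnormsq_select_le_sum[OF \<Gamma>inv_nonneg \<tau>(1)])
  have nb: "wnormsq \<Gamma>inv b \<le> real T * (1 - \<delta>)^2 * B * E"
  proof -
    have "wnormsq \<Gamma>inv b \<le> (\<Sum>s<T. wnormsq \<Gamma>inv (z k0 - z (k0 + s)))"
      unfolding b_def by (rule wnormsq_select_le_sum[OF \<Gamma>inv_nonneg \<tau>(1)])
    also have "\<dots> \<le> (\<Sum>s<T. (1 - \<delta>)^2 * (B * E))"
    proof (rule sum_mono)
      fix s assume "s \<in> {..<T}"
      then have "wnormsq \<Gamma>inv (x k0 - x (k0 + s)) \<le> B * E"
        unfolding E_def using drift by (intro drift_le_sq_steps) auto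
      then show "wnormsq \<Gamma>inv (z k0 - z (k0 + s)) \<le> (1 - \<delta>)^2 * (B * E)"
        using fb_map_contraction[OF z_in_fb_map z_in_fb_map] by (meson mult_left_mono order_trans zero_le_power2)
    qed
    finally show ?thesis by simp
  qed
  have "wnormsq \<Gamma>inv (z k0 - x k0) \<le> (sqrt (wnormsq \<Gamma>inv a) + sqrt (wnormsq \<Gamma>inv b))^2"
    unfolding zx by (rule wnormsq_add_le[OF \<Gamma>inv_nonneg])
  also have "\<dots> \<le> (sqrt E + sqrt (real T * (1 - \<delta>)^2 * B * E))^2"
    using na nb \<Gamma>inv_nonneg by (intro power_mono add_mono add_nonneg_nonneg real_sqrt_le_mono) (auto intro: wnormsq_nonneg)
  also have "sqrt (real T * (1 - \<delta>)^2 * B * E) = sqrt (real T * B) * (1 - \<delta>) * sqrt E"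
    using \<delta>_lt_1 by (simp add: real_sqrt_mult ac_simps)
  also have "(sqrt E + sqrt (real T * B) * (1 - \<delta>) * sqrt E)^2 = (1 + sqrt (real T * B) * (1 - \<delta>))^2 * (sqrt E)^2"
    by (simp add: power_mult_distrib[symmetric] algebra_simps)
  also have "(sqrt E)^2 = E" unfolding E_def using sq_steps_nonneg by simp
  finally show ?thesis unfolding E_def .
qed

lemma fbe_epoch_contraction:
  assumes cover: "\<forall>i\<in>{1..N}. \<exists>t<T. i \<in> I (Suc (k0 + t))" and B: "0 \<le> B"
    and drift: "\<And>s j. s < T \<Longrightarrow> (x (k0 + s) $ j - x k0 $ j)^2 \<le> B * (\<Sum>t<T. (step (k0 + t) $ j)^2)"
  defines "\<rho> \<equiv> sqrt (real T * B) * (1 - \<delta>)"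
  shows "fbe (x (k0 + T)) - \<Phi> xs \<le> (1 - \<delta> * (1 - \<Delta>) / ((1 - \<delta>) * (1 + \<rho>)^2)) * (fbe (x k0) - \<Phi> xs)"
proof -
  define K where "K = (1 - \<delta>) / (2 * \<delta>) * (1 + \<rho>)^2"
  have \<rho>: "0 \<le> \<rho>" using \<delta>_lt_1 B by (simp add: \<rho>_def)
  have "fbe (x k0) - \<Phi> xs \<le> (1 - \<delta>) / (2 * \<delta>) * wnormsq \<Gamma>inv (z k0 - x k0)"
    by (rule fbe_error_bound[OF z_in_fb_map])
  also have "\<dots> \<le> K * sq_steps k0 T"
    unfolding K_def \<rho>_def mult.assoc using \<delta>_pos \<delta>_lt_1
    by (intro mult_left_mono residual_le_sq_steps[OF cover B drift]) auto
  finally have "fbe (x (k0 + T)) - \<Phi> xs \<le> (1 - (1 - \<Delta>) / 2 / K) * (fbe (x k0) - \<Phi> xs)"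
    using fbe_epoch_decrease \<delta>_pos \<delta>_lt_1 \<Delta>_lt_1 \<rho>
    by (intro contraction_of_error_bound_and_decrease) (auto simp: K_def)
  also have "(1 - \<Delta>) / 2 / K = \<delta> * (1 - \<Delta>) / ((1 - \<delta>) * (1 + \<rho>)^2)"
    using \<delta>_pos \<delta>_lt_1 \<rho> by (simp add: K_def field_simps)
  finally show ?thesis .
qed

definition linear_rates :: "nat \<Rightarrow> real \<Rightarrow> bool" where
  "linear_rates T c \<longleftrightarrow> (\<forall>\<nu>.
      fbe (x (T * (\<nu> + 1))) - \<Phi> xs \<le> (1 - c) * (fbe (x (T * \<nu>)) - \<Phi> xs)
    \<and> (x 0 \<in> domG \<longrightarrow> \<Phi> (z (T * \<nu>)) - \<Phi> xs \<le> (\<Phi> (x 0) - \<Phi> xs) * (1 - c) ^ \<nu>)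
    \<and> (x 0 \<in> domG \<longrightarrow> 1/2 * wnormsq (\<lambda>j. \<mu> (blk j) / real N) (z (T * \<nu>) - xs)
          \<le> (\<Phi> (x 0) - \<Phi> xs) * (1 - c) ^ \<nu>))"

lemma linear_rates_of_epoch_contraction:
  assumes epoch: "\<And>\<nu>. fbe (x (T * (\<nu> + 1))) - \<Phi> xs \<le> (1 - c0) * (fbe (x (T * \<nu>)) - \<Phi> xs)"
    and c: "c \<le> c0" "c0 \<le> 1"
  shows "linear_rates T c"
  unfolding linear_rates_def
proof (intro allI conjI impI)
  fix \<nu> :: nat
  have gap: "0 \<le> fbe (x k) - \<Phi> xs" for k using min_le_fbe[OF z_in_fb_map] by simp
  have step: "fbe (x (T * Suc n)) - \<Phi> xs \<le> (1 - c) * (fbe (x (T * n)) - \<Phi> xs)" for n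
    using epoch[of n] mult_right_mono[OF _ gap, of "1 - c0" "1 - c" "T * n"] c by simp
  then show "fbe (x (T * (\<nu> + 1))) - \<Phi> xs \<le> (1 - c) * (fbe (x (T * \<nu>)) - \<Phi> xs)" by simp
  assume x0: "x 0 \<in> domG"
  have "\<Phi> (z (T * \<nu>)) - \<Phi> xs \<le> fbe (x (T * \<nu>)) - \<Phi> xs" using Phi_le_fbe[OF z_in_fb_map] by simp
  also have "\<dots> \<le> (1 - c) ^ \<nu> * (fbe (x (T * 0)) - \<Phi> xs)"
    using step c by (intro geometric_decay[where a = "\<lambda>n. fbe (x (T * n)) - \<Phi> xs"]) auto
  also have "\<dots> \<le> (1 - c) ^ \<nu> * (\<Phi> (x 0) - \<Phi> xs)"
    using fbe_le_Phi[OF z_in_fb_map x0] c by (intro mult_left_mono) auto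
  finally show phi: "\<Phi> (z (T * \<nu>)) - \<Phi> xs \<le> (\<Phi> (x 0) - \<Phi> xs) * (1 - c) ^ \<nu>"
    by (simp add: mult.commute)
  then show "1/2 * wnormsq (\<lambda>j. \<mu> (blk j) / real N) (z (T * \<nu>) - xs) \<le> (\<Phi> (x 0) - \<Phi> xs) * (1 - c) ^ \<nu>"
    using quadratic_growth[OF fb_map_minimizes_model(1)[OF z_in_fb_map[of "T * \<nu>"]]] by linarith
qed

lemma epoch_rate_le_1:
  assumes "0 \<le> \<rho>"
  shows "\<delta> * (1 - \<Delta>) / ((1 - \<delta>) * (1 + \<rho>)^2) \<le> 1"
proof -
  have "\<delta> * (1 - \<Delta>) \<le> 1 * (1 - \<Delta>)"
    using \<delta>_lt_1 \<Delta>_lt_1 by (intro mult_right_mono) auto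
  also have "\<dots> \<le> 1 - \<delta>" using \<delta>_le_\<Delta> by simp
  also have "\<dots> \<le> (1 - \<delta>) * (1 + \<rho>)^2"
    using \<delta>_lt_1 assms mult_left_mono[of 1 "(1 + \<rho>)^2" "1 - \<delta>"] by (simp add: one_le_power)
  finally show ?thesis using \<delta>_lt_1 assms by simp
qed

lemma ess_cyclic_epoch_contraction:
  assumes "ess_cyclic N I T"
  shows "fbe (x (T * (\<nu> + 1))) - \<Phi> xs
    \<le> (1 - \<delta> * (1 - \<Delta>) / ((1 - \<delta>) * (1 + real T * (1 - \<delta>))^2)) * (fbe (x (T * \<nu>)) - \<Phi> xs)"
proof -
  define k0 where "k0 = T * \<nu>"
  have "\<forall>i\<in>{1..N}. \<exists>t<T. i \<in> I (Suc (k0 + t))"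
  proof
    fix i assume "i \<in> {1..N}"
    then obtain t where "t \<in> {1..T}" "i \<in> I (k0 + t)" using assms unfolding ess_cyclic_def by blast
    then show "\<exists>t<T. i \<in> I (Suc (k0 + t))" by (intro exI[of _ "t - 1"]) auto
  qed
  moreover have "(x (k0 + s) $ j - x k0 $ j)^2 \<le> real T * (\<Sum>t<T. (step (k0 + t) $ j)^2)"
    if "s < T" for s j
  proof -
    have "(x (k0 + s) $ j - x k0 $ j)^2 \<le> (\<Sum>t<s. (step (k0 + t) $ j)^2) * real s"
      unfolding x_drift_eq_sum_steps
      using sum_squared_le_sum_of_squares[of "\<lambda>t. step (k0 + t) $ j" "{..<s}"] by simp
    also have "\<dots> \<le> (\<Sum>t<T. (step (k0 + t) $ j)^2) * real T"
      using that by (intro mult_mono sum_mono2 sum_nonneg) auto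
    finally show ?thesis by (simp add: mult.commute)
  qed
  ultimately show ?thesis
    using fbe_epoch_contraction[of T k0 "real T"] by (simp add: k0_def algebra_simps)
qed

lemma shuffled_cyclic_epoch_contraction:
  assumes "shuffled_cyclic N I"
  shows "fbe (x (N * (\<nu> + 1))) - \<Phi> xs
    \<le> (1 - \<delta> * (1 - \<Delta>) / ((1 - \<delta>) * (1 + sqrt (real N) * (1 - \<delta>))^2)) * (fbe (x (N * \<nu>)) - \<Phi> xs)"
proof -
  obtain \<pi> :: "nat \<Rightarrow> nat \<Rightarrow> nat" where perm: "\<pi> \<nu> permutes {1..N}"
    and I_eq: "\<And>k. I (Suc k) = {\<pi> (k div N) (k mod N + 1)}"
    using assms unfolding shuffled_cyclic_def by blast
  define k0 where "k0 = N * \<nu>"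
  have I_epoch: "I (Suc (k0 + t)) = {\<pi> \<nu> (t + 1)}" if "t < N" for t
    using that I_eq[of "k0 + t"] by (simp add: k0_def)
  have "\<forall>i\<in>{1..N}. \<exists>t<N. i \<in> I (Suc (k0 + t))"
  proof
    fix i assume "i \<in> {1..N}"
    then obtain t where "t \<in> {1..N}" "\<pi> \<nu> t = i"
      using permutes_image[OF perm] by (metis imageE)
    then show "\<exists>t<N. i \<in> I (Suc (k0 + t))" using I_epoch[of "t - 1"] by (intro exI[of _ "t - 1"]) auto
  qed
  txt \<open>Within an epoch every block, hence every coordinate, is updated exactly once.\<close>
  moreover have "(x (k0 + s) $ j - x k0 $ j)^2 \<le> 1 * (\<Sum>t<N. (step (k0 + t) $ j)^2)"
    if "s < N" for s j
  proof -
    have "t = t'" if "t < N" "t' < N" "step (k0 + t) $ j \<noteq> 0" "step (k0 + t') $ j \<noteq> 0" for t t'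
    proof -
      have "\<pi> \<nu> (t + 1) = \<pi> \<nu> (t' + 1)"
        using that x_upd I_epoch by (metis diff_self singletonD vector_minus_component)
      then show ?thesis using permutes_inj[OF perm] by (simp add: inj_eq)
    qed
    then show ?thesis
      unfolding x_drift_eq_sum_steps using that by (simp add: square_sum_le_if_at_most_one_nonzero)
  qed
  ultimately show ?thesis
    using fbe_epoch_contraction[of N k0 1] by (simp add: k0_def algebra_simps)
qed

lemma ess_cyclic_linear_rates:
  assumes "ess_cyclic N I T"
  shows "linear_rates T (\<delta> * (1 - \<Delta>) / (real N * (1 + real T * (1 - \<delta>))^2 * (1 - \<delta>)))"
proof -
  have \<rho>: "0 \<le> real T * (1 - \<delta>)" using \<delta>_lt_1 by simp
  let ?c0 = "\<delta> * (1 - \<Delta>) / ((1 - \<delta>) * (1 + real T * (1 - \<delta>))^2)"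
  have "0 \<le> ?c0" using \<delta>_pos \<delta>_lt_1 \<Delta>_lt_1 by simp
  then have "?c0 / real N \<le> ?c0 / 1" using N by (intro divide_left_mono) auto
  then show ?thesis
    using linear_rates_of_epoch_contraction[OF ess_cyclic_epoch_contraction[OF assms] _ epoch_rate_le_1[OF \<rho>]]
    by (simp add: ac_simps)
qed

lemma shuffled_cyclic_linear_rates:
  assumes "shuffled_cyclic N I"
  shows "linear_rates N (\<delta> * (1 - \<Delta>) / (real N * (2 - \<delta>)^2 * (1 - \<delta>)))"
proof -
  have \<rho>: "0 \<le> sqrt (real N) * (1 - \<delta>)" using \<delta>_lt_1 by simp
  have "1 + sqrt (real N) * (1 - \<delta>) \<le> sqrt (real N) * (2 - \<delta>)"
    using N by (simp add: algebra_simps)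
  then have "(1 + sqrt (real N) * (1 - \<delta>))^2 \<le> real N * (2 - \<delta>)^2"
    using \<rho> by (metis power_mono power_mult_distrib real_sqrt_pow2 of_nat_0_le_iff add_nonneg_nonneg zero_le_one)
  then have "\<delta> * (1 - \<Delta>) / (real N * (2 - \<delta>)^2 * (1 - \<delta>))
      \<le> \<delta> * (1 - \<Delta>) / ((1 - \<delta>) * (1 + sqrt (real N) * (1 - \<delta>))^2)"
    using N \<delta>_pos \<delta>_lt_1 \<Delta>_lt_1 add_pos_nonneg[OF zero_less_one \<rho>]
    by (intro divide_left_mono) (auto simp: mult.commute)
  then show ?thesis
    by (rule linear_rates_of_epoch_contraction[OF shuffled_cyclic_epoch_contraction[OF assms] _ epoch_rate_le_1[OF \<rho>]])
qed

end

theorem theorem2p9: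
  fixes N :: nat
    and blk :: "'n::finite \<Rightarrow> nat"
    and f :: "nat \<Rightarrow> real^'n \<Rightarrow> real" and df :: "nat \<Rightarrow> real^'n \<Rightarrow> real^'n"
    and L \<mu> \<gamma> :: "nat \<Rightarrow> real"
    and domG :: "(real^'n) set" and G :: "real^'n \<Rightarrow> real"
    and x z :: "nat \<Rightarrow> real^'n" and I :: "nat \<Rightarrow> nat set"
    and xs :: "real^'n"
  assumes N: "N \<ge> 1"
    and blk_range: "\<forall>j. blk j \<in> {1..N}"
    and blk_nonempty: "\<forall>i\<in>{1..N}. \<exists>j. blk j = i"
    and f_block: "\<forall>i\<in>{1..N}. \<forall>u v. blkproj blk i u = blkproj blk i v \<longrightarrow> f i u = f i v"
    and f_diff: "\<forall>i\<in>{1..N}. \<forall>u. (f i has_derivative (\<lambda>h. inner (df i u) h)) (at u)"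
    and L_pos: "\<forall>i\<in>{1..N}. L i > 0"
    and f_lip: "\<forall>i\<in>{1..N}. \<forall>u v. norm (df i u - df i v) \<le> L i * norm (blkproj blk i (u - v))"
    and \<gamma>_range: "\<forall>i\<in>{1..N}. 0 < \<gamma> i \<and> \<gamma> i < real N / L i"
    and \<mu>_pos: "\<forall>i\<in>{1..N}. \<mu> i > 0"
    and f_strong: "\<forall>i\<in>{1..N}. convex_on UNIV (\<lambda>u. f i u - \<mu> i / 2 * (norm (blkproj blk i u))^2)"
    and G_proper: "domG \<noteq> {}"
    and G_lsc: "lsc_dom domG G"
    and G_convex: "convex domG" "convex_on domG G"
    and xs_min: "xs \<in> domG" "\<forall>y\<in>domG. Fsum N f xs + G xs \<le> Fsum N f y + G y"
    and z_T: "\<forall>k. z k \<in> Tmap N blk \<gamma> df domG G (x k)"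
    and I_sub: "\<forall>k. I (Suc k) \<subseteq> {1..N}"
    and x_upd: "\<forall>k. \<forall>j. x (Suc k) $ j = (if blk j \<in> I (Suc k) then z k $ j else x k $ j)"
  shows
   "let \<Phi> = (\<lambda>u. Fsum N f u + G u);
        m = \<Phi> xs;
        FB = FBE N blk \<gamma> f df domG G;
        \<delta> = Min ((\<lambda>i. \<gamma> i * \<mu> i / real N) ` {1..N});
        \<Delta> = Max ((\<lambda>i. \<gamma> i * L i / real N) ` {1..N});
        rates = (\<lambda>(P::nat) (c::real). \<forall>\<nu>::nat.
            FB (x (P * (\<nu> + 1))) - m \<le> (1 - c) * (FB (x (P * \<nu>)) - m)
          \<and> (x 0 \<in> domG \<longrightarrow> \<Phi> (z (P * \<nu>)) - m \<le> (\<Phi> (x 0) - m) * (1 - c) ^ \<nu>)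
          \<and> (x 0 \<in> domG \<longrightarrow> 1/2 * wnormsq (\<lambda>j. \<mu> (blk j) / real N) (z (P * \<nu>) - xs)
                                \<le> (\<Phi> (x 0) - m) * (1 - c) ^ \<nu>))
    in (\<forall>T::nat. T \<ge> 1 \<longrightarrow> ess_cyclic N I T \<longrightarrow>
          rates T (\<delta> * (1 - \<Delta>) / (real N * (1 + real T * (1 - \<delta>))^2 * (1 - \<delta>))))
     \<and> (shuffled_cyclic N I \<longrightarrow>
          rates N (\<delta> * (1 - \<Delta>) / (real N * (2 - \<delta>)^2 * (1 - \<delta>))))"
proof -
  interpret block_coordinate_iteration N blk f df L \<mu> \<gamma> domG G xs x z I
    by unfold_locales (fact assms)+
  show ?thesis
    unfolding Let_def \<delta>_def[symmetric] \<Delta>_def[symmetric] linear_rates_def[symmetric]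
    using ess_cyclic_linear_rates shuffled_cyclic_linear_rates by blast
qed

end
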